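(* Let $q>0$. If $L(q)$ contains a loop of odd length, then $1/q$ is an algebraic integer.
   Context: Let $q>0$. For an integer $k\ge0$ and $\mathbf m=(m_0,\dots,m_k)\in\mathbb Z^{k+1}$ put $\mathbf m_j=(m_0,\dots,m_j)$. Define $c(q,\mathbf m_0)=m_0$ and recursively $c(q,\mathbf m_j)=m_j+\frac{1}{q\,c(q,\mathbf m_{j-1})}$ for $1\le j\le k$. The vector $\mathbf m$ is a path for $q$ of length $k$ if $c(q,\mathbf m_j)\ne0$ for $0\le j\le k-1$. A loop is a path $\mathbf m$ with $c(q,\mathbf m)=0$, and $L(q)$ denotes the set of loops for $q$. *)

theory Defs
  imports Complex_Main "HOL-Computational_Algebra.Polynomial"
begin

(* crev q [m_j, m_{j-1}, ..., m_0] = c(q, (m_0,...,m_j)) *)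
fun crev :: "real \<Rightarrow> int list \<Rightarrow> real" where
  "crev q [] = 0"
| "crev q [x] = of_int x"
| "crev q (x # y # ys) = of_int x + 1 / (q * crev q (y # ys))"

definition c :: "real \<Rightarrow> int list \<Rightarrow> real" where
  "c q m = crev q (rev m)"

definition is_path :: "real \<Rightarrow> int list \<Rightarrow> bool" where
  "is_path q m \<longleftrightarrow> m \<noteq> [] \<and> (\<forall>j < length m - 1. c q (take (Suc j) m) \<noteq> 0)"

definition path_length :: "int list \<Rightarrow> nat" where
  "path_length m = length m - 1"

definition L :: "real \<Rightarrow> int list set" where
  "L q = {m. is_path q m \<and> c q m = 0}"

end

(*
  With t = 1/q, clearing denominators in the continued fraction
  c(q, m) = m_k + t/(m_(k-1) + t/(... + t/m_0)) gives the continuant K_m(t), an integer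
  polynomial with c(q, m_j) = K_(m_j)(t) / K_(m_(j-1))(t). Telescoping, K_m(1/q) is the product of
  all c(q, m_j), so it vanishes when m is a loop. When m has an even number k + 1 of entries,
  K_m has degree (k+1)/2 and its top coefficient, that of t^((k+1)/2), is 1; so 1/q is a root
  of a monic integer polynomial.
*)
theory Submission
  imports Defs
begin

lemma map_poly_add:
  assumes "f 0 = 0" "\<And>a b. f (a + b) = f a + f b"
  shows "map_poly f (p + r) = map_poly f p + map_poly f r"
  by (intro poly_eqI) (simp add: assms coeff_map_poly)

(* The argument is the reversed vector [m_k, ..., m_0], as for crev. *)
fun continuant :: "int list \<Rightarrow> int poly" where
  "continuant [] = 1"
| "continuant [x] = [:x:]"
| "continuant (x # y # ys) = smult x (continuant (y # ys)) + pCons 0 (continuant ys)"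

lemma degree_continuant_le: "degree (continuant zs) \<le> length zs div 2"
proof (induction zs rule: continuant.induct)
  case (3 x y ys)
  have "degree (smult x (continuant (y # ys))) \<le> length (x # y # ys) div 2"
    using "3.IH"(1) degree_smult_le[of x "continuant (y # ys)"] by simp
  moreover have "degree (pCons 0 (continuant ys)) \<le> length (x # y # ys) div 2"
    using "3.IH"(2) degree_pCons_le[of 0 "continuant ys"] by simp
  ultimately show ?case
    by (simp add: degree_add_le)
qed simp_all

lemma coeff_continuant_half:
  assumes "even (length zs)"
  shows "coeff (continuant zs) (length zs div 2) = 1"
  using assms
proof (induction zs rule: continuant.induct)
  case (3 x y ys)
  have "coeff (continuant (y # ys)) (Suc (length ys div 2)) = 0"
    using degree_continuant_le[of "y # ys"] "3.prems" by (intro coeff_eq_0) simp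
  moreover have "length (x # y # ys) div 2 = Suc (length ys div 2)"
    by simp
  ultimately show ?case
    using "3.IH"(2) "3.prems" by simp
qed simp_all

lemma lead_coeff_continuant:
  assumes "even (length zs)"
  shows "lead_coeff (continuant zs) = 1"
proof -
  have "degree (continuant zs) = length zs div 2"
    using degree_continuant_le[of zs] le_degree[of "continuant zs"]
      coeff_continuant_half[OF assms] by (simp add: le_antisym)
  then show ?thesis
    using coeff_continuant_half[OF assms] by simp
qed

lemma poly_continuant_eq_prod:
  fixes q :: real
  assumes "\<forall>i \<in> {1..<length zs}. crev q (drop i zs) \<noteq> 0"
  shows "poly (map_poly of_int (continuant zs)) (1 / q) = (\<Prod>i<length zs. crev q (drop i zs))"
  using assms
proof (induction zs rule: continuant.induct)
  case (3 x y ys)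
  define K where "K zs = poly (map_poly of_int (continuant zs)) (1 / q)" for zs
  define P where "P zs = (\<Prod>i<length zs. crev q (drop i zs))" for zs
  have P_Cons: "P (z # zs) = crev q (z # zs) * P zs" for z zs
    unfolding P_def length_Cons prod.lessThan_Suc_shift by simp
  have suffix_nz: "crev q (drop i (y # ys)) \<noteq> 0" if "i < length (y # ys)" for i
    using "3.prems" that by (auto dest: bspec[of _ _ "Suc i"])
  have "K (y # ys) = P (y # ys)"
    using "3.IH"(1) suffix_nz unfolding K_def P_def by simp
  moreover have "K ys = P ys"
    using "3.IH"(2) suffix_nz[of "Suc _"] unfolding K_def P_def by simp
  ultimately have K_y: "K (y # ys) = crev q (y # ys) * K ys"
    by (simp add: P_Cons)
  have "K (x # y # ys) = of_int x * K (y # ys) + 1 / q * K ys"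
    unfolding K_def by (simp add: map_poly_add map_poly_smult map_poly_pCons)
  also have "\<dots> = crev q (x # y # ys) * K (y # ys)"
    using K_y suffix_nz[of 0] by (simp add: field_simps)
  also have "\<dots> = P (x # y # ys)"
    by (simp add: P_Cons \<open>K (y # ys) = P (y # ys)\<close>)
  finally show ?case
    unfolding K_def P_def .
qed (simp_all add: map_poly_pCons)

lemma crev_drop_rev: "crev q (drop i (rev m)) = c q (take (length m - i) m)"
  by (cases "i \<le> length m") (simp_all add: c_def rev_take)

lemma poly_continuant_loop:
  assumes "m \<in> L q"
  shows "poly (map_poly of_int (continuant (rev m))) (1 / q) = 0"
proof -
  have "m \<noteq> []" and path: "\<forall>j < length m - 1. c q (take (Suc j) m) \<noteq> 0"
    and loop: "c q m = 0"
    using assms unfolding L_def is_path_def by auto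
  have "\<forall>i \<in> {1..<length (rev m)}. crev q (drop i (rev m)) \<noteq> 0"
  proof
    fix i assume "i \<in> {1..<length (rev m)}"
    then have "length m - i = Suc (length m - Suc i)" "length m - Suc i < length m - 1"
      by auto
    then show "crev q (drop i (rev m)) \<noteq> 0"
      using path by (simp add: crev_drop_rev)
  qed
  then have "poly (map_poly of_int (continuant (rev m))) (1 / q)
      = (\<Prod>i<length m. crev q (drop i (rev m)))"
    by (simp add: poly_continuant_eq_prod)
  also have "\<dots> = 0"
    using \<open>m \<noteq> []\<close> loop by (intro prod_zero bexI[of _ 0]) (simp_all add: c_def)
  finally show ?thesis .
qed

theorem corollary2:
  fixes q :: real
  assumes "q > 0"
    and "\<exists>m \<in> L q. odd (path_length m)"
  shows "algebraic_int (1 / q)"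
proof -
  obtain m where "m \<in> L q" and "odd (path_length m)"
    using assms(2) by blast
  moreover from this have "even (length (rev m))"
    unfolding L_def is_path_def path_length_def by (cases m) auto
  ultimately have "poly (map_poly of_int (continuant (rev m))) (1 / q) = 0"
    and "lead_coeff (continuant (rev m)) = 1"
    by (simp_all add: poly_continuant_loop lead_coeff_continuant)
  then show ?thesis
    unfolding algebraic_int_altdef_ipoly by blast
qed

end
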